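(* Let $(V,L,\varphi,E)$ be an extendible valuation system. Then the valuation system $(V,\overline L,\overline\varphi,E)$ is complete.
   Context: A valuation system $(V,L,\varphi,E)$ consists of: (i) a lattice $V$ which is $\sigma$-distributive (for every $a\in V$ and sequence $(b_n)$ with existing infimum, $\bigwedge_n(a\vee b_n)$ exists and equals $a\vee\bigwedge_n b_n$, and dually for suprema); (ii) a sublattice $L$ of $V$; (iii) a partially ordered abelian group $E$ which is R-complete (whenever $x_1\ge x_2\ge\cdots$ and $y_1\ge y_2\ge\cdots$ in $E$ are such that $\bigwedge_n(x_n+y_n)$ exists, $\bigwedge_n x_n$ and $\bigwedge_n y_n$ exist; dually for increasing sequences); (iv) a valuation $\varphi:L\to E$ (order-preserving, $\varphi(a\wedge b)+\varphi(a\vee b)=\varphi(a)+\varphi(b)$). A decreasing (resp. increasing) sequence $(a_n)$ in $L$ is $\varphi$-convergent if $\bigwedge_n a_n$ exists in $V$ and $\bigwedge_n\varphi(a_n)$ exists in $E$ (resp. with suprema). The system is $\Pi$-complete if for every $\varphi$-convergent decreasing $(a_n)$ in $L$, $\bigwedge_n a_n\in L$ and $\varphi(\bigwedge_n a_n)=\bigwedge_n\varphi(a_n)$; $\Sigma$-complete dually; complete if both. $\Pi L:=\{\bigwedge_n a_n:(a_n)\ \varphi\text{-convergent decreasing}\}$ and $\varphi$ is $\Pi$-extendible if there is a valuation $\Pi\varphi:\Pi L\to E$ with $\Pi\varphi(\bigwedge_n a_n)=\bigwedge_n\varphi(a_n)$; $\Sigma L,\Sigma\varphi$ dually. Hierarchy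 (transfinite recursion): $\Pi_0\varphi=\Sigma_0\varphi=\varphi$; $\varphi$ is $\Pi_{\alpha+1}$-extendible iff it is $\Sigma_\alpha$-extendible and $\Sigma_\alpha\varphi$ is $\Pi$-extendible, with $\Pi_{\alpha+1}\varphi=\Pi(\Sigma_\alpha\varphi)$; $\varphi$ is $\Sigma_{\alpha+1}$-extendible iff it is $\Pi_\alpha$-extendible and $\Pi_\alpha\varphi$ is $\Sigma$-extendible, with $\Sigma_{\alpha+1}\varphi=\Sigma(\Pi_\alpha\varphi)$; at a limit $\lambda$, $\Pi_\lambda$-extendible iff $\Pi_\alpha$-extendible for all $\alpha<\lambda$, and $\Pi_\lambda\varphi$ is the common extension of the $\Pi_\alpha\varphi$ on $\bigcup_{\alpha<\lambda}\Pi_\alpha L$; similarly $\Sigma_\lambda$. The hierarchy has collapsed at $Q$, where $Q=\Pi_\alpha\varphi$ or $Q=\Sigma_\alpha\varphi$, if $\varphi$ is $\Pi_{\alpha+1}$- and $\Sigma_{\alpha+1}$-extendible and $\Pi(Q)=Q=\Sigma(Q)$. $\varphi$ is extendible if the hierarchy has collapsed at some $Q$; this $Q$ is then unique and is denoted $\overline\varphi:\overline L\to E$. *)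

theory Defs
  imports Main
begin

definition is_inf_of :: "'a::order \<Rightarrow> 'a set \<Rightarrow> bool" where
  "is_inf_of x S \<longleftrightarrow> (\<forall>s\<in>S. x \<le> s) \<and> (\<forall>y. (\<forall>s\<in>S. y \<le> s) \<longrightarrow> y \<le> x)"

definition is_sup_of :: "'a::order \<Rightarrow> 'a set \<Rightarrow> bool" where
  "is_sup_of x S \<longleftrightarrow> (\<forall>s\<in>S. s \<le> x) \<and> (\<forall>y. (\<forall>s\<in>S. s \<le> y) \<longrightarrow> x \<le> y)"

definition has_inf :: "'a::order set \<Rightarrow> bool" where
  "has_inf S \<longleftrightarrow> (\<exists>x. is_inf_of x S)"

definition has_sup :: "'a::order set \<Rightarrow> bool" where
  "has_sup S \<longleftrightarrow> (\<exists>x. is_sup_of x S)"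

definition inf_of :: "'a::order set \<Rightarrow> 'a" where
  "inf_of S = (THE x. is_inf_of x S)"

definition sup_of :: "'a::order set \<Rightarrow> 'a" where
  "sup_of S = (THE x. is_sup_of x S)"

text \<open>sigma-distributivity of the lattice V (here: the whole type 'v)\<close>
definition sigma_distributive :: "'v::lattice itself \<Rightarrow> bool" where
  "sigma_distributive _ \<longleftrightarrow>
     (\<forall>(a::'v) (b::nat \<Rightarrow> 'v). has_inf (range b) \<longrightarrow>
        is_inf_of (sup a (inf_of (range b))) (range (\<lambda>n. sup a (b n)))) \<and>
     (\<forall>(a::'v) (b::nat \<Rightarrow> 'v). has_sup (range b) \<longrightarrow>
        is_sup_of (inf a (sup_of (range b))) (range (\<lambda>n. inf a (b n))))"

text \<open>R-completeness of the partially ordered abelian group E (here: the whole type 'e)\<close>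
definition R_complete :: "'e::ordered_ab_group_add itself \<Rightarrow> bool" where
  "R_complete _ \<longleftrightarrow>
     (\<forall>(x::nat \<Rightarrow> 'e) y. (\<forall>n. x (Suc n) \<le> x n) \<and> (\<forall>n. y (Suc n) \<le> y n) \<and>
        has_inf (range (\<lambda>n. x n + y n)) \<longrightarrow> has_inf (range x) \<and> has_inf (range y)) \<and>
     (\<forall>(x::nat \<Rightarrow> 'e) y. (\<forall>n. x n \<le> x (Suc n)) \<and> (\<forall>n. y n \<le> y (Suc n)) \<and>
        has_sup (range (\<lambda>n. x n + y n)) \<longrightarrow> has_sup (range x) \<and> has_sup (range y))"

text \<open>L is a sublattice of V and phi : L -> E is a valuation (only values on L matter)\<close>
definition valuation :: "'v::lattice set \<Rightarrow> ('v \<Rightarrow> 'e::ordered_ab_group_add) \<Rightarrow> bool" where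
  "valuation L \<phi> \<longleftrightarrow>
     (\<forall>a\<in>L. \<forall>b\<in>L. inf a b \<in> L \<and> sup a b \<in> L) \<and>
     (\<forall>a\<in>L. \<forall>b\<in>L. a \<le> b \<longrightarrow> \<phi> a \<le> \<phi> b) \<and>
     (\<forall>a\<in>L. \<forall>b\<in>L. \<phi> (inf a b) + \<phi> (sup a b) = \<phi> a + \<phi> b)"

definition valuation_system :: "'v::lattice set \<Rightarrow> ('v \<Rightarrow> 'e::ordered_ab_group_add) \<Rightarrow> bool" where
  "valuation_system L \<phi> \<longleftrightarrow>
     sigma_distributive TYPE('v) \<and> R_complete TYPE('e) \<and> valuation L \<phi>"

definition conv_dec :: "'v::lattice set \<Rightarrow> ('v \<Rightarrow> 'e::ordered_ab_group_add) \<Rightarrow> (nat \<Rightarrow> 'v) \<Rightarrow> bool" where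
  "conv_dec L \<phi> a \<longleftrightarrow> (\<forall>n. a n \<in> L) \<and> (\<forall>n. a (Suc n) \<le> a n) \<and>
     has_inf (range a) \<and> has_inf (range (\<lambda>n. \<phi> (a n)))"

definition conv_inc :: "'v::lattice set \<Rightarrow> ('v \<Rightarrow> 'e::ordered_ab_group_add) \<Rightarrow> (nat \<Rightarrow> 'v) \<Rightarrow> bool" where
  "conv_inc L \<phi> a \<longleftrightarrow> (\<forall>n. a n \<in> L) \<and> (\<forall>n. a n \<le> a (Suc n)) \<and>
     has_sup (range a) \<and> has_sup (range (\<lambda>n. \<phi> (a n)))"

definition Pi_complete :: "'v::lattice set \<Rightarrow> ('v \<Rightarrow> 'e::ordered_ab_group_add) \<Rightarrow> bool" where
  "Pi_complete L \<phi> \<longleftrightarrow> (\<forall>a. conv_dec L \<phi> a \<longrightarrow>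
     inf_of (range a) \<in> L \<and> \<phi> (inf_of (range a)) = inf_of (range (\<lambda>n. \<phi> (a n))))"

definition Sigma_complete :: "'v::lattice set \<Rightarrow> ('v \<Rightarrow> 'e::ordered_ab_group_add) \<Rightarrow> bool" where
  "Sigma_complete L \<phi> \<longleftrightarrow> (\<forall>a. conv_inc L \<phi> a \<longrightarrow>
     sup_of (range a) \<in> L \<and> \<phi> (sup_of (range a)) = sup_of (range (\<lambda>n. \<phi> (a n))))"

definition complete_vs :: "'v::lattice set \<Rightarrow> ('v \<Rightarrow> 'e::ordered_ab_group_add) \<Rightarrow> bool" where
  "complete_vs L \<phi> \<longleftrightarrow> Pi_complete L \<phi> \<and> Sigma_complete L \<phi>"

definition PiL :: "'v::lattice set \<Rightarrow> ('v \<Rightarrow> 'e::ordered_ab_group_add) \<Rightarrow> 'v set" where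
  "PiL L \<phi> = {inf_of (range a) | a. conv_dec L \<phi> a}"

definition SigmaL :: "'v::lattice set \<Rightarrow> ('v \<Rightarrow> 'e::ordered_ab_group_add) \<Rightarrow> 'v set" where
  "SigmaL L \<phi> = {sup_of (range a) | a. conv_inc L \<phi> a}"

definition is_Pi_ext :: "'v::lattice set \<Rightarrow> ('v \<Rightarrow> 'e::ordered_ab_group_add) \<Rightarrow> ('v \<Rightarrow> 'e) \<Rightarrow> bool" where
  "is_Pi_ext L \<phi> \<psi> \<longleftrightarrow> valuation (PiL L \<phi>) \<psi> \<and>
     (\<forall>a. conv_dec L \<phi> a \<longrightarrow> \<psi> (inf_of (range a)) = inf_of (range (\<lambda>n. \<phi> (a n))))"

definition is_Sigma_ext :: "'v::lattice set \<Rightarrow> ('v \<Rightarrow> 'e::ordered_ab_group_add) \<Rightarrow> ('v \<Rightarrow> 'e) \<Rightarrow> bool" where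
  "is_Sigma_ext L \<phi> \<psi> \<longleftrightarrow> valuation (SigmaL L \<phi>) \<psi> \<and>
     (\<forall>a. conv_inc L \<phi> a \<longrightarrow> \<psi> (sup_of (range a)) = sup_of (range (\<lambda>n. \<phi> (a n))))"

definition Pi_extendible :: "'v::lattice set \<Rightarrow> ('v \<Rightarrow> 'e::ordered_ab_group_add) \<Rightarrow> bool" where
  "Pi_extendible L \<phi> \<longleftrightarrow> (\<exists>\<psi>. is_Pi_ext L \<phi> \<psi>)"

definition Sigma_extendible :: "'v::lattice set \<Rightarrow> ('v \<Rightarrow> 'e::ordered_ab_group_add) \<Rightarrow> bool" where
  "Sigma_extendible L \<phi> \<longleftrightarrow> (\<exists>\<psi>. is_Sigma_ext L \<phi> \<psi>)"

text \<open>The extension Pi phi (determined on PiL L phi)\<close>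
definition Pi_ext :: "'v::lattice set \<Rightarrow> ('v \<Rightarrow> 'e::ordered_ab_group_add) \<Rightarrow> 'v \<Rightarrow> 'e" where
  "Pi_ext L \<phi> = (SOME \<psi>. is_Pi_ext L \<phi> \<psi>)"

definition Sigma_ext :: "'v::lattice set \<Rightarrow> ('v \<Rightarrow> 'e::ordered_ab_group_add) \<Rightarrow> 'v \<Rightarrow> 'e" where
  "Sigma_ext L \<phi> = (SOME \<psi>. is_Sigma_ext L \<phi> \<psi>)"

type_synonym ('v, 'e) stage = "('v set \<times> ('v \<Rightarrow> 'e)) option"

definition Pi_step :: "('v::lattice, 'e::ordered_ab_group_add) stage \<Rightarrow> ('v, 'e) stage" where
  "Pi_step s = (case s of None \<Rightarrow> None
     | Some (M, \<psi>) \<Rightarrow> if Pi_extendible M \<psi> then Some (PiL M \<psi>, Pi_ext M \<psi>) else None)"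

definition Sigma_step :: "('v::lattice, 'e::ordered_ab_group_add) stage \<Rightarrow> ('v, 'e) stage" where
  "Sigma_step s = (case s of None \<Rightarrow> None
     | Some (M, \<psi>) \<Rightarrow> if Sigma_extendible M \<psi> then Some (SigmaL M \<psi>, Sigma_ext M \<psi>) else None)"

text \<open>Limit stage: defined iff all earlier stages are; the union of the domains with the
  common extension of the earlier valuations.\<close>
definition limit_stage :: "('i \<Rightarrow> ('v, 'e) stage) \<Rightarrow> 'i set \<Rightarrow> ('v, 'e) stage" where
  "limit_stage g B = (if \<forall>\<beta>\<in>B. g \<beta> \<noteq> None then
      Some (\<Union>\<beta>\<in>B. fst (the (g \<beta>)),
            \<lambda>x. snd (the (g (SOME \<beta>. \<beta> \<in> B \<and> x \<in> fst (the (g \<beta>))))) x)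
    else None)"

definition is_succ_of :: "'i::wellorder \<Rightarrow> 'i \<Rightarrow> bool" where
  "is_succ_of \<alpha> \<beta> \<longleftrightarrow> \<beta> < \<alpha> \<and> \<not> (\<exists>\<gamma>. \<beta> < \<gamma> \<and> \<gamma> < \<alpha>)"

text \<open>hierarchy L phi alpha = (Pi_alpha, Sigma_alpha); None means "not extendible".\<close>
definition hierarchy :: "'v::lattice set \<Rightarrow> ('v \<Rightarrow> 'e::ordered_ab_group_add) \<Rightarrow> 'i::wellorder \<Rightarrow>
    ('v, 'e) stage \<times> ('v, 'e) stage" where
  "hierarchy L \<phi> = wfrec {(x, y). x < y} (\<lambda>f \<alpha>.
     if \<not> (\<exists>\<beta>. \<beta> < \<alpha>) then (Some (L, \<phi>), Some (L, \<phi>))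
     else if \<exists>\<beta>. is_succ_of \<alpha> \<beta> then
       (let \<beta> = (THE \<beta>. is_succ_of \<alpha> \<beta>) in (Pi_step (snd (f \<beta>)), Sigma_step (fst (f \<beta>))))
     else (limit_stage (\<lambda>\<beta>. fst (f \<beta>)) {\<beta>. \<beta> < \<alpha>}, limit_stage (\<lambda>\<beta>. snd (f \<beta>)) {\<beta>. \<beta> < \<alpha>}))"

definition fixed_point :: "'v::lattice set \<Rightarrow> ('v \<Rightarrow> 'e::ordered_ab_group_add) \<Rightarrow> bool" where
  "fixed_point M \<psi> \<longleftrightarrow>
     Pi_extendible M \<psi> \<and> PiL M \<psi> = M \<and> (\<forall>x\<in>M. Pi_ext M \<psi> x = \<psi> x) \<and>
     Sigma_extendible M \<psi> \<and> SigmaL M \<psi> = M \<and> (\<forall>x\<in>M. Sigma_ext M \<psi> x = \<psi> x)"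

text \<open>The hierarchy has collapsed at Q (Q = Pi_alpha phi or Q = Sigma_alpha phi):
  phi is Pi_(alpha+1)- and Sigma_(alpha+1)-extendible and Pi(Q) = Q = Sigma(Q).\<close>
definition collapsed_at :: "'v::lattice set \<Rightarrow> ('v \<Rightarrow> 'e::ordered_ab_group_add) \<Rightarrow> 'i::wellorder \<Rightarrow>
    'v set \<times> ('v \<Rightarrow> 'e) \<Rightarrow> bool" where
  "collapsed_at L \<phi> \<alpha> Q \<longleftrightarrow>
     Pi_step (snd (hierarchy L \<phi> \<alpha>)) \<noteq> None \<and> Sigma_step (fst (hierarchy L \<phi> \<alpha>)) \<noteq> None \<and>
     (fst (hierarchy L \<phi> \<alpha>) = Some Q \<or> snd (hierarchy L \<phi> \<alpha>) = Some Q) \<and>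
     fixed_point (fst Q) (snd Q)"

definition extendible :: "'v::lattice set \<Rightarrow> ('v \<Rightarrow> 'e::ordered_ab_group_add) \<Rightarrow> 'i::wellorder itself \<Rightarrow> bool" where
  "extendible L \<phi> _ \<longleftrightarrow> (\<exists>(\<alpha>::'i) Q. collapsed_at L \<phi> \<alpha> Q)"

text \<open>(overline L, overline phi): the point at which the hierarchy collapsed\<close>
definition closure_vs :: "'v::lattice set \<Rightarrow> ('v \<Rightarrow> 'e::ordered_ab_group_add) \<Rightarrow> 'i::wellorder itself \<Rightarrow>
    'v set \<times> ('v \<Rightarrow> 'e)" where
  "closure_vs L \<phi> _ = (SOME Q. \<exists>(\<alpha>::'i). collapsed_at L \<phi> \<alpha> Q)"

end

theory Submission
  imports Defs
begin

text \<open>At a collapse point Q of the hierarchy the operators Pi and Sigma return Q itself.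
  Every phi-convergent sequence in Q therefore has its infimum (supremum) in Pi(Q) = Q
  (Sigma(Q) = Q), and the value assigned there by Pi(Q) (Sigma(Q)), which is the limit of
  the values, agrees with the valuation of Q. This is exactly completeness of Q.\<close>

lemma valuation_cong:
  assumes "valuation M f" "\<forall>x\<in>M. f x = g x"
  shows "valuation M g"
  using assms unfolding valuation_def by metis

lemma Pi_ext_is_Pi_ext:
  assumes "Pi_extendible M \<psi>"
  shows "is_Pi_ext M \<psi> (Pi_ext M \<psi>)"
  using assms unfolding Pi_extendible_def Pi_ext_def by (rule someI_ex)

lemma Sigma_ext_is_Sigma_ext:
  assumes "Sigma_extendible M \<psi>"
  shows "is_Sigma_ext M \<psi> (Sigma_ext M \<psi>)"
  using assms unfolding Sigma_extendible_def Sigma_ext_def by (rule someI_ex)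

lemma Pi_complete_if_Pi_fixed:
  assumes "Pi_extendible M \<psi>" "PiL M \<psi> = M" "\<forall>x\<in>M. Pi_ext M \<psi> x = \<psi> x"
  shows "Pi_complete M \<psi>"
  unfolding Pi_complete_def
proof (intro allI impI conjI)
  fix a assume a: "conv_dec M \<psi> a"
  show inf_in: "inf_of (range a) \<in> M"
    using a assms(2) unfolding PiL_def by blast
  have "Pi_ext M \<psi> (inf_of (range a)) = inf_of (range (\<lambda>n. \<psi> (a n)))"
    using Pi_ext_is_Pi_ext[OF assms(1)] a unfolding is_Pi_ext_def by blast
  then show "\<psi> (inf_of (range a)) = inf_of (range (\<lambda>n. \<psi> (a n)))"
    using assms(3) inf_in by simp
qed

lemma Sigma_complete_if_Sigma_fixed:
  assumes "Sigma_extendible M \<psi>" "SigmaL M \<psi> = M" "\<forall>x\<in>M. Sigma_ext M \<psi> x = \<psi> x"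
  shows "Sigma_complete M \<psi>"
  unfolding Sigma_complete_def
proof (intro allI impI conjI)
  fix a assume a: "conv_inc M \<psi> a"
  show sup_in: "sup_of (range a) \<in> M"
    using a assms(2) unfolding SigmaL_def by blast
  have "Sigma_ext M \<psi> (sup_of (range a)) = sup_of (range (\<lambda>n. \<psi> (a n)))"
    using Sigma_ext_is_Sigma_ext[OF assms(1)] a unfolding is_Sigma_ext_def by blast
  then show "\<psi> (sup_of (range a)) = sup_of (range (\<lambda>n. \<psi> (a n)))"
    using assms(3) sup_in by simp
qed

lemma fixed_point_valuation:
  assumes "fixed_point M \<psi>"
  shows "valuation M \<psi>"
proof -
  have "Pi_extendible M \<psi>" "PiL M \<psi> = M" "\<forall>x\<in>M. Pi_ext M \<psi> x = \<psi> x"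
    using assms unfolding fixed_point_def by auto
  then show ?thesis
    using Pi_ext_is_Pi_ext valuation_cong unfolding is_Pi_ext_def by metis
qed

lemma fixed_point_complete_vs:
  assumes "fixed_point M \<psi>"
  shows "complete_vs M \<psi>"
  using assms Pi_complete_if_Pi_fixed Sigma_complete_if_Sigma_fixed
  unfolding fixed_point_def complete_vs_def by blast

lemma fixed_point_closure_vs:
  assumes "extendible L \<phi> TYPE('i::wellorder)"
  shows "fixed_point (fst (closure_vs L \<phi> TYPE('i))) (snd (closure_vs L \<phi> TYPE('i)))"
proof -
  have "\<exists>Q (\<alpha>::'i). collapsed_at L \<phi> \<alpha> Q"
    using assms unfolding extendible_def by blast
  then have "\<exists>\<alpha>::'i. collapsed_at L \<phi> \<alpha> (closure_vs L \<phi> TYPE('i))"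
    unfolding closure_vs_def by (rule someI_ex)
  then show ?thesis
    unfolding collapsed_at_def by blast
qed

theorem lemma5p30:
  fixes L :: "'v::lattice set" and \<phi> :: "'v \<Rightarrow> 'e::ordered_ab_group_add"
  assumes "valuation_system L \<phi>"
    and "extendible L \<phi> TYPE('i::wellorder)"
  shows "valuation_system (fst (closure_vs L \<phi> TYPE('i))) (snd (closure_vs L \<phi> TYPE('i)))
       \<and> complete_vs (fst (closure_vs L \<phi> TYPE('i))) (snd (closure_vs L \<phi> TYPE('i)))"
proof -
  have fixed: "fixed_point (fst (closure_vs L \<phi> TYPE('i))) (snd (closure_vs L \<phi> TYPE('i)))"
    using assms(2) by (rule fixed_point_closure_vs)
  show ?thesis
    using assms(1) fixed_point_valuation[OF fixed] fixed_point_complete_vs[OF fixed]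
    unfolding valuation_system_def by blast
qed

end
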